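(* Let $\mathbb{F}$ be an algebraically closed field of characteristic zero. The following elements are indecomposable in $\mathcal{O}(\mathcal{N}_3^3)^{GL_3}$: (a) $\alpha_1\mathrm{tr}(Y_1^2Y_2^2Y_3)+\alpha_2\mathrm{tr}(Y_2^2Y_1^2Y_3)$ for any $\alpha_1,\alpha_2\in\mathbb{F}$ not both zero; (b) $\mathrm{tr}(Y_1^2Y_2^2Y_1Y_3)$; (c) $\mathrm{tr}(Y_1^2Y_2^2Y_3^2)$.
   Context: $\mathcal{N}_3^3$ is the set of triples $\underline{A}=(A_1,A_2,A_3)$ of nilpotent $3\times3$ matrices over $\mathbb{F}$, with $GL_3$ acting by simultaneous conjugation; $\mathcal{O}(\mathcal{N}_3^3)^{GL_3}$ is the algebra of $GL_3$-invariant polynomial functions on $\mathcal{N}_3^3$, graded by total degree in the matrix entries. $\mathrm{tr}(Y_{i_1}\cdots Y_{i_r})$ denotes the invariant $\underline{A}\mapsto\mathrm{tr}(A_{i_1}\cdots A_{i_r})$. A homogeneous invariant $f$ is decomposable if it is a polynomial in homogeneous invariants of strictly lower degree; otherwise it is indecomposable. *)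

theory Defs
  imports "HOL-Analysis.Analysis" "HOL-Computational_Algebra.Polynomial" "HOL-Library.Numeral_Type"
begin

definition alg_closed :: "'a::field itself \<Rightarrow> bool" where
  "alg_closed _ \<longleftrightarrow> (\<forall>p::'a poly. 0 < degree p \<longrightarrow> (\<exists>x. poly p x = 0))"

type_synonym 'a mat3 = "'a ^ 3 ^ 3"
type_synonym 'a triple = "'a mat3 \<times> 'a mat3 \<times> 'a mat3"

definition mat_nilpotent :: "'a::field mat3 \<Rightarrow> bool" where
  "mat_nilpotent A \<longleftrightarrow> (\<exists>k::nat. ((\<lambda>B. A ** B) ^^ k) (mat 1) = 0)"

definition nil_triples :: "'a::field triple set" where
  "nil_triples = {(A1, A2, A3). mat_nilpotent A1 \<and> mat_nilpotent A2 \<and> mat_nilpotent A3}"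

inductive_set gen_alg :: "('b \<Rightarrow> 'a::comm_ring_1) set \<Rightarrow> ('b \<Rightarrow> 'a) set"
  for G where
    const: "(\<lambda>_. c) \<in> gen_alg G"
  | gen: "g \<in> G \<Longrightarrow> g \<in> gen_alg G"
  | add: "f \<in> gen_alg G \<Longrightarrow> g \<in> gen_alg G \<Longrightarrow> (\<lambda>x. f x + g x) \<in> gen_alg G"
  | mult: "f \<in> gen_alg G \<Longrightarrow> g \<in> gen_alg G \<Longrightarrow> (\<lambda>x. f x * g x) \<in> gen_alg G"

definition coord_funs :: "('a::field triple \<Rightarrow> 'a) set" where
  "coord_funs = (\<Union>i j. {(\<lambda>T. fst T $ i $ j), (\<lambda>T. fst (snd T) $ i $ j), (\<lambda>T. snd (snd T) $ i $ j)})"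

text \<open>Polynomial functions in the matrix entries (their restrictions to N_3^3 form O(N_3^3)).\<close>
definition poly_funs :: "('a::field triple \<Rightarrow> 'a) set" where
  "poly_funs = gen_alg coord_funs"

definition scale_triple :: "'a::field \<Rightarrow> 'a triple \<Rightarrow> 'a triple" where
  "scale_triple t T = (case T of (A1, A2, A3) \<Rightarrow>
     ((\<chi> i j. t * A1 $ i $ j), (\<chi> i j. t * A2 $ i $ j), (\<chi> i j. t * A3 $ i $ j)))"

definition conj_triple :: "'a::field mat3 \<Rightarrow> 'a triple \<Rightarrow> 'a triple" where
  "conj_triple P T = (case T of (A1, A2, A3) \<Rightarrow>
     (P ** A1 ** matrix_inv P, P ** A2 ** matrix_inv P, P ** A3 ** matrix_inv P))"

definition hom_invariant :: "nat \<Rightarrow> ('a::field triple \<Rightarrow> 'a) \<Rightarrow> bool" where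
  "hom_invariant d f \<longleftrightarrow>
     f \<in> poly_funs \<and>
     (\<forall>P T. invertible P \<longrightarrow> T \<in> nil_triples \<longrightarrow> f (conj_triple P T) = f T) \<and>
     (\<forall>t T. T \<in> nil_triples \<longrightarrow> f (scale_triple t T) = t ^ d * f T)"

definition decomposable :: "nat \<Rightarrow> ('a::field triple \<Rightarrow> 'a) \<Rightarrow> bool" where
  "decomposable d f \<longleftrightarrow>
     (\<exists>h \<in> gen_alg {g. \<exists>e<d. hom_invariant e g}. \<forall>T \<in> nil_triples. f T = h T)"

definition indecomposable :: "('a::field triple \<Rightarrow> 'a) \<Rightarrow> bool" where
  "indecomposable f \<longleftrightarrow> (\<exists>d. hom_invariant d f \<and> \<not> decomposable d f)"

end

theory Submission
  imports Defs
begin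

text \<open>
  Restrict to a linear family \<open>v \<mapsto> (v\<^sub>0 M\<^sub>0, v\<^sub>1 M\<^sub>1, v\<^sub>2 M\<^sub>2)\<close> of nilpotent triples on which
  the invariant \<open>f\<close> of degree \<open>d\<close> equals \<open>c v\<^sup>m\<close> with \<open>c \<noteq> 0\<close>. Every invariant of lower
  degree restricts to a polynomial in \<open>v\<close>, and homogeneity together with conjugations that
  rescale the \<open>M\<^sub>k\<close> force its coefficients to vanish on a set \<open>W \<ni> m\<close> of exponents with the
  property that whenever \<open>a \<in> W\<close> splits as \<open>b + c\<close> with \<open>b, c \<noteq> 0\<close>, one of \<open>b, c\<close> lies in \<open>W\<close>.
  Then no polynomial in lower-degree invariants contains \<open>v\<^sup>m\<close>, so \<open>f\<close> is indecomposable.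
  Rescaling does not reach the monomials \<open>v\<^sub>i v\<^sub>j\<close> with an upper and a lower shift matrix in
  slots \<open>i\<close> and \<open>j\<close>; there each shift is split into its two elementary matrices, and a
  permutation matrix relates the resulting coefficients.
\<close>

section \<open>Polynomial functions in finitely many variables\<close>

text \<open>A polynomial in \<open>v\<^sub>0, v\<^sub>1, \<dots>\<close> is represented by a list of terms (coefficient, exponent
  vector); an exponent vector may occur repeatedly.\<close>
type_synonym 'a terms = "('a \<times> nat list) list"

definition eval_monom :: "(nat \<Rightarrow> 'a::comm_semiring_1) \<Rightarrow> nat list \<Rightarrow> 'a" where
  "eval_monom v m = (\<Prod>i<length m. v i ^ (m ! i))"

definition eval_terms :: "'a::comm_semiring_1 terms \<Rightarrow> (nat \<Rightarrow> 'a) \<Rightarrow> 'a" where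
  "eval_terms L v = (\<Sum>(c, m)\<leftarrow>L. c * eval_monom v m)"

definition coeff_terms :: "'a::comm_monoid_add terms \<Rightarrow> nat list \<Rightarrow> 'a" where
  "coeff_terms L a = (\<Sum>(c, m)\<leftarrow>L. if m = a then c else 0)"

definition wf_terms :: "nat \<Rightarrow> 'a terms \<Rightarrow> bool" where
  "wf_terms n L \<longleftrightarrow> (\<forall>(c, m)\<in>set L. length m = n)"

definition mult_terms :: "'a::comm_semiring_1 terms \<Rightarrow> 'a terms \<Rightarrow> 'a terms" where
  "mult_terms L K = concat (map (\<lambda>(c, m). map (\<lambda>(d, k). (c * d, map2 (+) m k)) K) L)"

definition smult_terms :: "'a::comm_semiring_1 \<Rightarrow> 'a terms \<Rightarrow> 'a terms" where
  "smult_terms c L = map (\<lambda>(d, m). (c * d, m)) L"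

text \<open>The exponents of \<open>v\<^sup>m\<close> after renaming \<open>v\<^sub>i\<close> to \<open>v\<^bsub>\<pi> i\<^esub>\<close>.\<close>
definition rename_exps :: "nat \<Rightarrow> (nat \<Rightarrow> nat) \<Rightarrow> nat list \<Rightarrow> nat list" where
  "rename_exps n' \<pi> m = map (\<lambda>j. \<Sum>i | i < length m \<and> \<pi> i = j. m ! i) [0..<n']"

definition subst_terms :: "nat \<Rightarrow> (nat \<Rightarrow> nat) \<Rightarrow> (nat \<Rightarrow> 'a::comm_semiring_1) \<Rightarrow> 'a terms \<Rightarrow> 'a terms" where
  "subst_terms n' \<pi> c L = map (\<lambda>(d, m). (d * eval_monom c m, rename_exps n' \<pi> m)) L"

lemma eval_terms_simps [simp]:
  "eval_terms [] v = 0"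
  "eval_terms ((c, m) # L) v = c * eval_monom v m + eval_terms L v"
  "eval_terms (L @ K) v = eval_terms L v + eval_terms K v"
  by (simp_all add: eval_terms_def)

lemma coeff_terms_simps [simp]:
  "coeff_terms [] a = 0"
  "coeff_terms ((c, m) # L) a = (if m = a then c else 0) + coeff_terms L a"
  "coeff_terms (L @ K) a = coeff_terms L a + coeff_terms K a"
  by (simp_all add: coeff_terms_def)

lemma wf_terms_simps [simp]:
  "wf_terms n []"
  "wf_terms n ((c, m) # L) \<longleftrightarrow> length m = n \<and> wf_terms n L"
  "wf_terms n (L @ K) \<longleftrightarrow> wf_terms n L \<and> wf_terms n K"
  by (auto simp: wf_terms_def)

lemma coeff_terms_eq_0_if_length_neq:
  "wf_terms n L \<Longrightarrow> length a \<noteq> n \<Longrightarrow> coeff_terms L a = 0"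
  by (induction L) (auto simp: wf_terms_def)

lemma eval_monom_Nil [simp]: "eval_monom v [] = 1"
  by (simp add: eval_monom_def)

lemma eval_monom_Cons [simp]: "eval_monom v (k # m) = v 0 ^ k * eval_monom (\<lambda>i. v (Suc i)) m"
  unfolding eval_monom_def length_Cons prod.lessThan_Suc_shift by simp

lemma eval_monom_add:
  "length m = length k \<Longrightarrow> eval_monom v (map2 (+) m k) = eval_monom v m * eval_monom v k"
  by (simp add: eval_monom_def power_add prod.distrib)

lemma eval_monom_mult: "eval_monom (\<lambda>i. s i * v i) m = eval_monom s m * eval_monom v m"
  by (simp add: eval_monom_def power_mult_distrib prod.distrib)

lemma eval_monom_const: "eval_monom (\<lambda>_. c) m = c ^ sum_list m"
  by (simp add: eval_monom_def power_sum sum_list_sum_nth atLeast0LessThan)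

lemma eval_monom_replicate_0 [simp]: "eval_monom v (replicate n 0) = 1"
  by (simp add: eval_monom_def)

lemma eval_monom_rename_exps:
  assumes "\<forall>i<length m. \<pi> i < n'"
  shows "eval_monom v (rename_exps n' \<pi> m) = eval_monom (\<lambda>i. v (\<pi> i)) m"
proof -
  have "eval_monom (\<lambda>i. v (\<pi> i)) m = (\<Prod>j<n'. \<Prod>i | i < length m \<and> \<pi> i = j. v (\<pi> i) ^ (m ! i))"
    unfolding eval_monom_def
    by (rule prod.group[symmetric, where g = \<pi>, simplified Int_def, THEN trans])
       (use assms in \<open>auto intro!: prod.cong\<close>)
  also have "\<dots> = (\<Prod>j<n'. v j ^ (\<Sum>i | i < length m \<and> \<pi> i = j. m ! i))"
    by (auto simp: power_sum intro!: prod.cong)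
  finally show ?thesis
    by (simp add: eval_monom_def rename_exps_def)
qed

lemma eval_mult_terms:
  "wf_terms n L \<Longrightarrow> wf_terms n K \<Longrightarrow> eval_terms (mult_terms L K) v = eval_terms L v * eval_terms K v"
proof (induction L)
  case (Cons cm L)
  obtain c m where [simp]: "cm = (c, m)" by force
  have "eval_terms (map (\<lambda>(d, k). (c * d, map2 (+) m k)) K) v = c * eval_monom v m * eval_terms K v"
    using Cons.prems by (induction K) (auto simp: eval_monom_add algebra_simps)
  then show ?case
    using Cons by (simp add: mult_terms_def algebra_simps)
qed (simp add: mult_terms_def)

lemma wf_mult_terms: "wf_terms n L \<Longrightarrow> wf_terms n K \<Longrightarrow> wf_terms n (mult_terms L K)"
  by (force simp: wf_terms_def mult_terms_def)

lemma eval_smult_terms [simp]: "eval_terms (smult_terms c L) v = c * eval_terms L v"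
  by (induction L) (auto simp: smult_terms_def algebra_simps)

lemma coeff_smult_terms [simp]: "coeff_terms (smult_terms c L) a = c * coeff_terms L a"
  by (induction L) (auto simp: smult_terms_def algebra_simps)

lemma wf_smult_terms [simp]: "wf_terms n (smult_terms c L) = wf_terms n L"
  by (auto simp: wf_terms_def smult_terms_def)

lemma eval_subst_terms:
  assumes "wf_terms n L" "\<forall>i<n. \<pi> i < n'"
  shows "eval_terms (subst_terms n' \<pi> c L) v = eval_terms L (\<lambda>i. c i * v (\<pi> i))"
  using assms
  by (induction L) (auto simp: subst_terms_def eval_monom_rename_exps eval_monom_mult algebra_simps)

lemma wf_subst_terms: "wf_terms n' (subst_terms n' \<pi> c L)"
  by (auto simp: wf_terms_def subst_terms_def rename_exps_def)

lemma sum_list_terms_group: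
  fixes L :: "'a::comm_semiring_1 terms"
  assumes "finite S" "\<forall>(c, m)\<in>set L. \<phi> m \<noteq> 0 \<longrightarrow> m \<in> S"
  shows "(\<Sum>(c, m)\<leftarrow>L. c * \<phi> m) = (\<Sum>a\<in>S. coeff_terms L a * \<phi> a)"
  using assms(2)
proof (induction L)
  case (Cons cm L)
  obtain c m where [simp]: "cm = (c, m)" by force
  have "(\<Sum>a\<in>S. (if m = a then c else 0) * \<phi> a) = (\<Sum>a\<in>S. if m = a then c * \<phi> m else 0)"
    by (rule sum.cong) auto
  also have "\<dots> = c * \<phi> m"
    using Cons.prems assms(1) by (cases "m \<in> S") auto
  finally have "(\<Sum>a\<in>S. (if m = a then c else 0) * \<phi> a) = c * \<phi> m" .
  then show ?case
    using Cons by (simp add: algebra_simps sum.distrib)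
qed simp

lemma coeff_subst_terms:
  assumes "finite S" "wf_terms n L"
    and "\<And>m. length m = n \<Longrightarrow> rename_exps n' \<pi> m = b \<Longrightarrow> eval_monom c m \<noteq> 0 \<Longrightarrow> m \<in> S"
    and "\<And>m. m \<in> S \<Longrightarrow> rename_exps n' \<pi> m = b"
  shows "coeff_terms (subst_terms n' \<pi> c L) b = (\<Sum>a\<in>S. coeff_terms L a * eval_monom c a)"
proof -
  have "coeff_terms (subst_terms n' \<pi> c L) b
      = (\<Sum>(d, m)\<leftarrow>L. d * (if rename_exps n' \<pi> m = b then eval_monom c m else 0))"
    by (induction L) (auto simp: subst_terms_def)
  also have "\<dots> = (\<Sum>a\<in>S. coeff_terms L a * (if rename_exps n' \<pi> a = b then eval_monom c a else 0))"
    by (rule sum_list_terms_group) (use assms in \<open>auto simp: wf_terms_def split: if_splits\<close>)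
  also have "\<dots> = (\<Sum>a\<in>S. coeff_terms L a * eval_monom c a)"
    using assms(4) by simp
  finally show ?thesis .
qed

lemma finite_list_all2_le: "finite {b. list_all2 (\<le>) b (a :: nat list)}"
proof (rule finite_subset)
  have "b ! i \<le> Max (set a)" if "list_all2 (\<le>) b a" "i < length b" for b i
    using that by (metis le_trans list_all2_conv_all_nth List.finite_set Max_ge nth_mem)
  then show "{b. list_all2 (\<le>) b a} \<subseteq> {b. set b \<subseteq> {0..Max (set a)} \<and> length b = length a}"
    by (auto simp: list_all2_lengthD in_set_conv_nth)
qed (rule finite_lists_length_eq, simp)

lemma coeff_mult_terms:
  fixes L K :: "'a::comm_semiring_1 terms"
  assumes "wf_terms n L" "wf_terms n K" "length a = n"
  shows "coeff_terms (mult_terms L K) a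
    = (\<Sum>b | list_all2 (\<le>) b a. coeff_terms L b * coeff_terms K (map2 (-) a b))"
proof -
  define \<phi> where "\<phi> m = (if list_all2 (\<le>) m a then coeff_terms K (map2 (-) a m) else 0)" for m
  have split_iff: "map2 (+) m k = a \<longleftrightarrow> list_all2 (\<le>) m a \<and> k = map2 (-) a m"
    if "length m = n" "length k = n" for m k :: "nat list"
    using that assms(3) by (auto simp: list_all2_conv_all_nth intro!: nth_equalityI)
  have row: "coeff_terms (map (\<lambda>(d, k). (c * d, map2 (+) m k)) K') a
      = (if list_all2 (\<le>) m a then c * coeff_terms K' (map2 (-) a m) else 0)"
    if "length m = n" "wf_terms n K'" for c m and K' :: "'a terms"
    using that(2) by (induction K') (auto simp: split_iff[OF that(1)] algebra_simps)
  have "coeff_terms (mult_terms L K) a = (\<Sum>(c, m)\<leftarrow>L. c * \<phi> m)"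
    using assms(1)
    by (induction L) (auto simp: mult_terms_def row[OF _ assms(2)] \<phi>_def)
  also have "\<dots> = (\<Sum>b | list_all2 (\<le>) b a. coeff_terms L b * \<phi> b)"
    by (rule sum_list_terms_group) (auto simp: finite_list_all2_le \<phi>_def)
  also have "\<dots> = (\<Sum>b | list_all2 (\<le>) b a. coeff_terms L b * coeff_terms K (map2 (-) a b))"
    by (simp add: \<phi>_def)
  finally show ?thesis .
qed

definition slice_terms :: "nat \<Rightarrow> 'a terms \<Rightarrow> 'a terms" where
  "slice_terms k L = map (\<lambda>(c, m). (c, tl m)) (filter (\<lambda>(c, m). hd m = k) L)"

definition upoly_terms :: "'a::comm_semiring_1 terms \<Rightarrow> (nat \<Rightarrow> 'a) \<Rightarrow> 'a poly" where
  "upoly_terms L w = (\<Sum>(c, m)\<leftarrow>L. monom (c * eval_monom w (tl m)) (hd m))"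

lemma poly_upoly_terms:
  "wf_terms (Suc n) L \<Longrightarrow> poly (upoly_terms L w) x = eval_terms L (case_nat x w)"
proof (induction L)
  case (Cons cm L)
  then obtain c k m where "cm = (c, k # m)"
    by (cases cm) (auto simp: length_Suc_conv)
  with Cons show ?case
    by (simp add: upoly_terms_def poly_monom algebra_simps)
qed (simp add: upoly_terms_def)

lemma coeff_upoly_terms:
  "wf_terms (Suc n) L \<Longrightarrow> coeff (upoly_terms L w) k = eval_terms (slice_terms k L) w"
proof (induction L)
  case (Cons cm L)
  then obtain c k m where "cm = (c, k # m)"
    by (cases cm) (auto simp: length_Suc_conv)
  with Cons show ?case
    by (simp add: upoly_terms_def slice_terms_def coeff_monom)
qed (simp add: upoly_terms_def slice_terms_def)

lemma coeff_slice_terms: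
  "wf_terms (Suc n) L \<Longrightarrow> coeff_terms (slice_terms k L) a = coeff_terms L (k # a)"
proof (induction L)
  case (Cons cm L)
  then obtain c k m where "cm = (c, k # m)"
    by (cases cm) (auto simp: length_Suc_conv)
  with Cons show ?case
    by (simp add: slice_terms_def)
qed (simp add: slice_terms_def)

lemma wf_slice_terms: "wf_terms (Suc n) L \<Longrightarrow> wf_terms n (slice_terms k L)"
  by (auto simp: wf_terms_def slice_terms_def)

text \<open>Induction on the number of variables, viewing the polynomial as univariate in \<open>v\<^sub>0\<close>.\<close>
lemma coeff_terms_eq_0_if_eval_eq_0:
  fixes L :: "'a::field_char_0 terms"
  assumes "wf_terms n L" "\<forall>v. eval_terms L v = 0"
  shows "coeff_terms L a = 0"
  using assms
proof (induction n arbitrary: L a)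
  case 0
  have "eval_terms L v = coeff_terms L []" for v
    using \<open>wf_terms 0 L\<close> by (induction L) (auto simp: eval_monom_def)
  then show ?case
    using 0 coeff_terms_eq_0_if_length_neq[of 0 L a] by (cases "a = []") auto
next
  case (Suc n)
  show ?case
  proof (cases a)
    case Nil
    then show ?thesis
      using Suc.prems coeff_terms_eq_0_if_length_neq by fastforce
  next
    case (Cons k a')
    have "upoly_terms L w = 0" for w
      using Suc.prems poly_all_0_iff_0[of "upoly_terms L w"] by (simp add: poly_upoly_terms)
    then have "\<forall>w. eval_terms (slice_terms k L) w = 0"
      using Suc.prems by (metis coeff_0 coeff_upoly_terms)
    then show ?thesis
      using Suc.IH[of "slice_terms k L"] Suc.prems
      by (simp add: Cons wf_slice_terms coeff_slice_terms)
  qed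
qed

lemma coeff_terms_eq_if_eval_eq:
  fixes L K :: "'a::field_char_0 terms"
  assumes "wf_terms n L" "wf_terms n K" "eval_terms L = eval_terms K"
  shows "coeff_terms L a = coeff_terms K a"
proof -
  have "coeff_terms (L @ smult_terms (-1) K) a = 0"
    by (rule coeff_terms_eq_0_if_eval_eq_0[of n]) (use assms in auto)
  then show ?thesis by simp
qed

definition polyfun :: "nat \<Rightarrow> ((nat \<Rightarrow> 'a::comm_semiring_1) \<Rightarrow> 'a) \<Rightarrow> bool" where
  "polyfun n \<phi> \<longleftrightarrow> (\<exists>L. wf_terms n L \<and> \<phi> = eval_terms L)"

text \<open>Representation-independent by \<open>pcoeff_eval_terms\<close>; meaningless unless \<open>polyfun n \<phi>\<close>.\<close>
definition pcoeff :: "nat \<Rightarrow> ((nat \<Rightarrow> 'a::comm_semiring_1) \<Rightarrow> 'a) \<Rightarrow> nat list \<Rightarrow> 'a" where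
  "pcoeff n \<phi> = coeff_terms (SOME L. wf_terms n L \<and> \<phi> = eval_terms L)"

lemma polyfunE:
  assumes "polyfun n \<phi>"
  obtains L where "wf_terms n L" "\<phi> = eval_terms L"
  using assms by (auto simp: polyfun_def)

lemma polyfunI: "wf_terms n L \<Longrightarrow> (\<And>v. \<phi> v = eval_terms L v) \<Longrightarrow> polyfun n \<phi>"
  by (auto simp: polyfun_def)

lemma pcoeff_eval_terms:
  fixes L :: "'a::field_char_0 terms"
  assumes "wf_terms n L"
  shows "pcoeff n (eval_terms L) a = coeff_terms L a"
proof -
  let ?K = "SOME K. wf_terms n K \<and> eval_terms L = eval_terms K"
  have "wf_terms n ?K \<and> eval_terms L = eval_terms ?K"
    by (rule someI[of _ L]) (use assms in simp)
  then show ?thesis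
    using assms coeff_terms_eq_if_eval_eq[of n ?K L a] by (simp add: pcoeff_def)
qed

lemma pcoeffI:
  fixes L :: "'a::field_char_0 terms"
  assumes "wf_terms n L" "\<And>v. \<phi> v = eval_terms L v"
  shows "pcoeff n \<phi> a = coeff_terms L a"
proof -
  have "\<phi> = eval_terms L" using assms(2) by auto
  then show ?thesis using pcoeff_eval_terms[OF assms(1)] by simp
qed

lemma pcoeff_eq_0_if_length_neq:
  fixes \<phi> :: "(nat \<Rightarrow> 'a::field_char_0) \<Rightarrow> 'a"
  assumes "polyfun n \<phi>" "length a \<noteq> n"
  shows "pcoeff n \<phi> a = 0"
  using assms by (auto elim!: polyfunE simp: pcoeff_eval_terms coeff_terms_eq_0_if_length_neq)

lemma polyfun_monom: "length m = n \<Longrightarrow> polyfun n (\<lambda>v. c * eval_monom v m)"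
  by (rule polyfunI[of _ "[(c, m)]"]) auto

lemma pcoeff_monom:
  "length m = n \<Longrightarrow> pcoeff n (\<lambda>v. c * eval_monom v m) a = (if m = a then c else (0::'a::field_char_0))"
  by (subst pcoeffI[of _ "[(c, m)]"]) auto

lemma polyfun_const: "polyfun n (\<lambda>_. c)"
  using polyfun_monom[of "replicate n 0" n c] by simp

lemma pcoeff_const:
  "pcoeff n (\<lambda>_. c) a = (if a = replicate n 0 then c else (0::'a::field_char_0))"
  using pcoeff_monom[of "replicate n 0" n c] by simp

lemma polyfun_var:
  assumes "k < n"
  shows "polyfun n (\<lambda>v. v k)"
proof -
  let ?m = "map (\<lambda>i. if i = k then 1 else 0) [0..<n]"
  have "eval_monom v ?m = (\<Prod>i<n. if i = k then v i else 1)" for v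
    unfolding eval_monom_def by (rule prod.cong) auto
  then have m: "eval_monom v ?m = v k" for v
    using assms by (simp add: prod.delta)
  have "polyfun n (\<lambda>v. 1 * eval_monom v ?m)"
    by (rule polyfun_monom) simp
  then show ?thesis
    by (simp only: m mult_1)
qed

lemma polyfun_add: "polyfun n \<phi> \<Longrightarrow> polyfun n \<psi> \<Longrightarrow> polyfun n (\<lambda>v. \<phi> v + \<psi> v)"
  by (elim polyfunE, rule polyfunI[of n "_ @ _"]) auto

lemma pcoeff_add:
  fixes \<phi> \<psi> :: "(nat \<Rightarrow> 'a::field_char_0) \<Rightarrow> 'a"
  assumes "polyfun n \<phi>" "polyfun n \<psi>"
  shows "pcoeff n (\<lambda>v. \<phi> v + \<psi> v) a = pcoeff n \<phi> a + pcoeff n \<psi> a"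
proof -
  obtain L K where "wf_terms n L" "\<phi> = eval_terms L" "wf_terms n K" "\<psi> = eval_terms K"
    using assms by (elim polyfunE) blast
  then show ?thesis
    by (simp add: pcoeffI[of n "L @ K"] pcoeff_eval_terms)
qed

lemma polyfun_mult:
  assumes "polyfun n \<phi>" "polyfun n \<psi>"
  shows "polyfun n (\<lambda>v. \<phi> v * \<psi> v)"
proof -
  obtain L K where "wf_terms n L" "\<phi> = eval_terms L" "wf_terms n K" "\<psi> = eval_terms K"
    using assms by (elim polyfunE) blast
  then show ?thesis
    by (intro polyfunI[of n "mult_terms L K"]) (auto simp: eval_mult_terms wf_mult_terms)
qed

lemma pcoeff_mult:
  fixes \<phi> \<psi> :: "(nat \<Rightarrow> 'a::field_char_0) \<Rightarrow> 'a"
  assumes "polyfun n \<phi>" "polyfun n \<psi>" "length a = n"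
  shows "pcoeff n (\<lambda>v. \<phi> v * \<psi> v) a
    = (\<Sum>b | list_all2 (\<le>) b a. pcoeff n \<phi> b * pcoeff n \<psi> (map2 (-) a b))"
proof -
  obtain L K where "wf_terms n L" "\<phi> = eval_terms L" "wf_terms n K" "\<psi> = eval_terms K"
    using assms by (elim polyfunE) blast
  then show ?thesis
    using assms(3)
    by (simp add: pcoeffI[of n "mult_terms L K"] eval_mult_terms wf_mult_terms coeff_mult_terms
        pcoeff_eval_terms)
qed

lemma pcoeff_smult:
  fixes \<phi> :: "(nat \<Rightarrow> 'a::field_char_0) \<Rightarrow> 'a"
  assumes "polyfun n \<phi>"
  shows "pcoeff n (\<lambda>v. c * \<phi> v) a = c * pcoeff n \<phi> a"
proof -
  obtain L where "wf_terms n L" "\<phi> = eval_terms L"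
    using assms by (elim polyfunE) blast
  then show ?thesis
    by (simp add: pcoeffI[of n "smult_terms c L"] pcoeff_eval_terms)
qed

lemma polyfun_sum: "finite S \<Longrightarrow> (\<And>k. k \<in> S \<Longrightarrow> polyfun n (\<phi> k)) \<Longrightarrow> polyfun n (\<lambda>v. \<Sum>k\<in>S. \<phi> k v)"
  by (induction S rule: finite_induct) (auto intro: polyfun_const polyfun_add)

lemma pcoeff_subst:
  fixes \<phi> :: "(nat \<Rightarrow> 'a::field_char_0) \<Rightarrow> 'a"
  assumes "polyfun n \<phi>" "\<forall>i<n. \<pi> i < n'" "finite S"
    and "\<And>m. length m = n \<Longrightarrow> rename_exps n' \<pi> m = b \<Longrightarrow> eval_monom c m \<noteq> 0 \<Longrightarrow> m \<in> S"
    and "\<And>m. m \<in> S \<Longrightarrow> rename_exps n' \<pi> m = b"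
  shows "pcoeff n' (\<lambda>v. \<phi> (\<lambda>i. c i * v (\<pi> i))) b = (\<Sum>a\<in>S. pcoeff n \<phi> a * eval_monom c a)"
proof -
  obtain L where L: "wf_terms n L" "\<phi> = eval_terms L"
    using assms by (elim polyfunE) blast
  have "pcoeff n' (\<lambda>v. \<phi> (\<lambda>i. c i * v (\<pi> i))) b = coeff_terms (subst_terms n' \<pi> c L) b"
    by (rule pcoeffI[OF wf_subst_terms]) (simp add: L eval_subst_terms[OF L(1) assms(2)])
  also have "\<dots> = (\<Sum>a\<in>S. coeff_terms L a * eval_monom c a)"
    by (rule coeff_subst_terms) (use assms L in auto)
  finally show ?thesis
    by (simp add: L pcoeff_eval_terms)
qed

lemma rename_exps_id: "length m = n \<Longrightarrow> rename_exps n (\<lambda>i. i) m = m"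
proof -
  have "{j. j = i \<and> j < length m} = {i}" if "i < length m" for i
    using that by auto
  then show "length m = n \<Longrightarrow> ?thesis"
    by (auto simp: rename_exps_def intro!: nth_equalityI)
qed

lemma rename_exps_sum:
  "rename_exps n' \<pi> m = map (\<lambda>j. \<Sum>i<length m. if \<pi> i = j then m ! i else 0) [0..<n']"
  unfolding rename_exps_def by (auto simp: sum.If_cases Int_def conj_commute)

lemma pcoeff_scaled:
  fixes \<phi> :: "(nat \<Rightarrow> 'a::field_char_0) \<Rightarrow> 'a"
  assumes "polyfun n \<phi>" "length a = n"
  shows "pcoeff n (\<lambda>v. \<phi> (\<lambda>i. s i * v i)) a = pcoeff n \<phi> a * eval_monom s a"
  using pcoeff_subst[OF assms(1), of "\<lambda>i. i" n "{a}" a s] assms(2) by (simp add: rename_exps_id)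

lemma pcoeff_eq_on_support:
  fixes \<phi> \<psi> :: "(nat \<Rightarrow> 'a::field_char_0) \<Rightarrow> 'a"
  assumes "polyfun n \<phi>" "polyfun n \<psi>" "length a = n"
    and "\<And>v. (\<forall>i<n. a ! i = 0 \<longrightarrow> v i = 0) \<Longrightarrow> \<phi> v = \<psi> v"
  shows "pcoeff n \<phi> a = pcoeff n \<psi> a"
proof -
  define s :: "nat \<Rightarrow> 'a" where "s i = (if i < n \<and> a ! i = 0 then 0 else 1)" for i
  have "eval_monom s a = (1::'a)"
    unfolding eval_monom_def s_def using assms(3) by (intro prod.neutral) auto
  moreover have "(\<lambda>v. \<phi> (\<lambda>i. s i * v i)) = (\<lambda>v. \<psi> (\<lambda>i. s i * v i))"
    by (rule ext, rule assms(4)) (simp add: s_def)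
  ultimately show ?thesis
    using pcoeff_scaled[OF assms(1,3), of s] pcoeff_scaled[OF assms(2,3), of s] by simp
qed

section \<open>Exponent sets closed under splitting\<close>

definition split_closed :: "nat list set \<Rightarrow> bool" where
  "split_closed W \<longleftrightarrow> (\<forall>a\<in>W. \<forall>b. list_all2 (\<le>) b a \<longrightarrow> b \<noteq> replicate (length a) 0 \<longrightarrow> b \<noteq> a \<longrightarrow>
     b \<in> W \<or> map2 (-) a b \<in> W)"

lemma split_closed_insert:
  assumes "split_closed W"
    and "\<And>b. list_all2 (\<le>) b m \<Longrightarrow> b \<noteq> replicate (length m) 0 \<Longrightarrow> b \<noteq> m \<Longrightarrow>
      b \<in> W \<or> map2 (-) m b \<in> W"
  shows "split_closed (insert m W)"
  using assms unfolding split_closed_def by blast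

lemma split_closed_Un: "split_closed V \<Longrightarrow> split_closed W \<Longrightarrow> split_closed (V \<union> W)"
  unfolding split_closed_def by blast

lemma sum_list_map2_minus:
  "list_all2 (\<le>) b a \<Longrightarrow> sum_list b + sum_list (map2 (-) a b) = sum_list (a :: nat list)"
  by (induction rule: list_all2_induct) auto

lemma split_closed_odd: "split_closed {a. odd (sum_list a)}"
  unfolding split_closed_def
  by (metis (mono_tags) mem_Collect_eq odd_add sum_list_map2_minus)

lemma map2_minus_replicate_0: "map2 (-) a (replicate (length a) 0) = (a :: nat list)"
  by (auto intro!: nth_equalityI)

lemma gen_alg_pcoeff_vanishes:
  fixes F :: "(nat \<Rightarrow> 'a::field_char_0) \<Rightarrow> 'b"
  assumes W: "split_closed W" "replicate n 0 \<notin> W"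
    and G: "\<And>g. g \<in> G \<Longrightarrow> polyfun n (\<lambda>v. g (F v)) \<and> (\<forall>a\<in>W. pcoeff n (\<lambda>v. g (F v)) a = 0)"
    and "h \<in> gen_alg G"
  shows "polyfun n (\<lambda>v. h (F v)) \<and> (\<forall>a\<in>W. pcoeff n (\<lambda>v. h (F v)) a = 0)"
  using \<open>h \<in> gen_alg G\<close>
proof (induction rule: gen_alg.induct)
  case (const c)
  then show ?case
    using W(2) by (auto simp: polyfun_const pcoeff_const)
next
  case (gen g)
  then show ?case by (rule G)
next
  case (add f g)
  then show ?case
    by (simp add: polyfun_add pcoeff_add)
next
  case (mult f g)
  have "pcoeff n (\<lambda>v. f (F v) * g (F v)) a = 0" if "a \<in> W" for a
  proof (cases "length a = n")
    case True
    have "b \<in> W \<or> map2 (-) a b \<in> W" if "list_all2 (\<le>) b a" for b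
      using W(1) \<open>a \<in> W\<close> that map2_minus_replicate_0[of a] unfolding split_closed_def
      by (cases "b = replicate (length a) 0"; cases "b = a") auto
    then have "pcoeff n (\<lambda>v. f (F v)) b * pcoeff n (\<lambda>v. g (F v)) (map2 (-) a b) = 0"
      if "list_all2 (\<le>) b a" for b
      using mult.IH that by auto
    then show ?thesis
      using mult.IH True by (auto simp: pcoeff_mult intro!: sum.neutral)
  qed (use mult.IH in \<open>simp add: polyfun_mult pcoeff_eq_0_if_length_neq\<close>)
  then show ?case
    using mult.IH by (simp add: polyfun_mult)
qed

lemma not_decomposable_if_monomial_absent:
  fixes f :: "'a::field_char_0 triple \<Rightarrow> 'a" and F :: "(nat \<Rightarrow> 'a) \<Rightarrow> 'a triple"
  assumes F: "\<And>v. F v \<in> nil_triples" "\<And>g. g \<in> poly_funs \<Longrightarrow> polyfun n (\<lambda>v. g (F v))"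
    and f: "\<And>v. f (F v) = c * eval_monom v m" "c \<noteq> 0" "length m = n"
    and W: "split_closed W" "replicate n 0 \<notin> W" "m \<in> W"
    and absent: "\<And>e g a. e < d \<Longrightarrow> hom_invariant e g \<Longrightarrow> a \<in> W \<Longrightarrow> pcoeff n (\<lambda>v. g (F v)) a = 0"
  shows "\<not> decomposable d f"
proof
  assume "decomposable d f"
  then obtain h where h: "h \<in> gen_alg {g. \<exists>e<d. hom_invariant e g}" "\<forall>T\<in>nil_triples. f T = h T"
    unfolding decomposable_def by blast
  have "polyfun n (\<lambda>v. h (F v)) \<and> (\<forall>a\<in>W. pcoeff n (\<lambda>v. h (F v)) a = 0)"
  proof (rule gen_alg_pcoeff_vanishes[OF W(1,2) _ h(1)])
    fix g :: "'a triple \<Rightarrow> 'a" assume "g \<in> {g. \<exists>e<d. hom_invariant e g}"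
    then obtain e where "e < d" "hom_invariant e g" by blast
    moreover from this have "g \<in> poly_funs" by (simp add: hom_invariant_def)
    ultimately show "polyfun n (\<lambda>v. g (F v)) \<and> (\<forall>a\<in>W. pcoeff n (\<lambda>v. g (F v)) a = 0)"
      using F(2) absent by blast
  qed
  then have "pcoeff n (\<lambda>v. h (F v)) m = 0"
    using W(3) by blast
  moreover have "(\<lambda>v. h (F v)) = (\<lambda>v. c * eval_monom v m)"
    using h(2) F(1) f(1) by auto
  ultimately show False
    using f(2,3) by (simp add: pcoeff_monom)
qed

section \<open>Invariants along linear families of triples\<close>

definition scale_mat :: "'a::field \<Rightarrow> 'a mat3 \<Rightarrow> 'a mat3" where
  "scale_mat c A = (\<chi> i j. c * A $ i $ j)"

lemma scale_mat_simps [simp]: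
  "scale_mat 0 A = 0"
  "scale_mat c 0 = 0"
  "scale_mat 1 A = A"
  "scale_mat c (scale_mat d A) = scale_mat (c * d) A"
  "scale_mat c A ** B = scale_mat c (A ** B)"
  "A ** scale_mat c B = scale_mat c (A ** B)"
  by (simp_all add: scale_mat_def vec_eq_iff matrix_matrix_mult_def sum_distrib_left mult_ac)

lemma scale_mat_sum: "scale_mat c (\<Sum>k\<in>S. A k) = (\<Sum>k\<in>S. scale_mat c (A k))"
  by (induction S rule: infinite_finite_induct) (auto simp: scale_mat_def vec_eq_iff algebra_simps)

lemma trace_scale_mat: "trace (scale_mat c A) = c * trace A"
  by (simp add: trace_def scale_mat_def sum_distrib_left)

lemma matrix_mult_sum_left: "(A :: 'a::field mat3) ** (\<Sum>k\<in>S. B k) = (\<Sum>k\<in>S. A ** B k)"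
  by (induction S rule: infinite_finite_induct) (auto simp: matrix_add_ldistrib)

lemma matrix_mult_sum_right: "(\<Sum>k\<in>S. B k) ** (A :: 'a::field mat3) = (\<Sum>k\<in>S. B k ** A)"
  by (induction S rule: infinite_finite_induct)
    (auto simp: vec_eq_iff matrix_matrix_mult_def sum.distrib algebra_simps)

lemma mat_nilpotent_cube: "A ** A ** A = 0 \<Longrightarrow> mat_nilpotent A"
  unfolding mat_nilpotent_def by (intro exI[of _ 3]) (simp add: numeral_3_eq_3 matrix_mul_assoc)

lemma mat_nilpotent_zero: "mat_nilpotent (0 :: 'a::field mat3)"
  by (rule mat_nilpotent_cube) simp

lemma mat_nilpotent_scale_mat:
  assumes "mat_nilpotent A"
  shows "mat_nilpotent (scale_mat c A)"
proof -
  have pow: "((\<lambda>B. scale_mat c A ** B) ^^ k) (mat 1) = scale_mat (c ^ k) (((\<lambda>B. A ** B) ^^ k) (mat 1))"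
    for k by (induction k) (simp_all add: mult.commute)
  then show ?thesis
    using assms unfolding mat_nilpotent_def by (metis scale_mat_simps(2))
qed

lemma matrix_inv_eqI:
  fixes P Q :: "'a::field mat3"
  assumes "P ** Q = mat 1"
  shows "matrix_inv P = Q"
proof -
  have QP: "Q ** P = mat 1"
    using assms matrix_left_right_inverse by blast
  have "P ** matrix_inv P = mat 1 \<and> matrix_inv P ** P = mat 1"
    unfolding matrix_inv_def by (rule someI[of _ Q]) (use assms QP in simp)
  then have "matrix_inv P ** P = mat 1" ..
  have "matrix_inv P = matrix_inv P ** (P ** Q)"
    by (simp add: assms)
  also have "\<dots> = Q"
    by (simp add: matrix_mul_assoc \<open>matrix_inv P ** P = mat 1\<close>)
  finally show ?thesis .
qed

definition map_triple :: "('a \<Rightarrow> 'b) \<Rightarrow> 'a \<times> 'a \<times> 'a \<Rightarrow> 'b \<times> 'b \<times> 'b" where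
  "map_triple f T = (f (fst T), f (fst (snd T)), f (snd (snd T)))"

lemma map_triple_simps [simp]:
  "map_triple f (A, B, C) = (f A, f B, f C)"
  "map_triple f (map_triple g T) = map_triple (f \<circ> g) T"
  by (simp_all add: map_triple_def)

definition triple_nth :: "'a triple \<Rightarrow> nat \<Rightarrow> 'a mat3" where
  "triple_nth T k = (if k = 0 then fst T else if k = 1 then fst (snd T) else snd (snd T))"

lemma triple_nth_map_triple [simp]: "triple_nth (map_triple f T) k = f (triple_nth T k)"
  by (simp add: triple_nth_def map_triple_def)

lemma scale_triple_eq: "scale_triple t T = map_triple (scale_mat t) T"
  by (cases T) (simp add: scale_triple_def scale_mat_def)

lemma conj_triple_eq: "P ** Q = mat 1 \<Longrightarrow> conj_triple P T = map_triple (\<lambda>A. P ** A ** Q) T"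
  by (cases T) (simp add: conj_triple_def matrix_inv_eqI)

lemma hom_invariantD:
  assumes "hom_invariant d f" "T \<in> nil_triples"
  shows "invertible P \<Longrightarrow> f (conj_triple P T) = f T" "f (scale_triple t T) = t ^ d * f T"
  using assms unfolding hom_invariant_def by blast+

lemma hom_invariant_conj:
  assumes "hom_invariant e g" "T \<in> nil_triples" "P ** (Q :: 'a::field mat3) = mat 1"
  shows "g (map_triple (\<lambda>A. P ** A ** Q) T) = g T"
proof -
  have "invertible P"
    using assms(3) matrix_left_right_inverse unfolding invertible_def by blast
  then have "g (conj_triple P T) = g T"
    by (rule hom_invariantD(1)[OF assms(1,2)])
  then show ?thesis
    by (simp add: conj_triple_eq[OF assms(3)])
qed

lemma hom_invariant_scale:
  "hom_invariant e g \<Longrightarrow> T \<in> nil_triples \<Longrightarrow> g (map_triple (scale_mat t) T) = t ^ e * g T"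
  by (simp add: hom_invariantD(2) flip: scale_triple_eq)

definition lin_family :: "nat \<Rightarrow> (nat \<Rightarrow> 'a::field triple) \<Rightarrow> (nat \<Rightarrow> 'a) \<Rightarrow> 'a triple" where
  "lin_family n Ts v = (\<Sum>k<n. map_triple (scale_mat (v k)) (Ts k))"

lemma lin_family_scaled: "lin_family n Ts (\<lambda>k. s k * v k) = lin_family n (\<lambda>k. map_triple (scale_mat (s k)) (Ts k)) v"
  by (simp add: lin_family_def comp_def mult.commute)

lemma scale_lin_family: "map_triple (scale_mat t) (lin_family n Ts v) = lin_family n Ts (\<lambda>k. t * v k)"
  by (simp add: lin_family_def map_triple_def fst_sum snd_sum scale_mat_sum sum_prod)

lemma conj_lin_family:
  "map_triple (\<lambda>A. P ** A ** Q) (lin_family n Ts v) = lin_family n (\<lambda>k. map_triple (\<lambda>A. P ** A ** Q) (Ts k)) v"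
  by (simp add: lin_family_def map_triple_def fst_sum snd_sum matrix_mult_sum_left matrix_mult_sum_right
      sum_prod)

lemma lin_family_cong_support:
  assumes "\<And>k. k < n \<Longrightarrow> v k \<noteq> 0 \<Longrightarrow> Ts k = Ts' k"
  shows "lin_family n Ts v = lin_family n Ts' v"
proof -
  have "map_triple (scale_mat (v k)) (Ts k) = map_triple (scale_mat (v k)) (Ts' k)" if "k < n" for k
    using assms[OF that] by (cases "v k = 0") (simp_all add: map_triple_def)
  then show ?thesis
    unfolding lin_family_def by simp
qed

lemma polyfun_lin_family:
  fixes g :: "'a::field_char_0 triple \<Rightarrow> 'a"
  assumes "g \<in> poly_funs"
  shows "polyfun n (\<lambda>v. g (lin_family n Ts v))"
  using assms unfolding poly_funs_def
proof (induction rule: gen_alg.induct)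
  case (gen g)
  have entry: "polyfun n (\<lambda>v. sel (lin_family n Ts v) $ i $ j)"
    if "sel \<in> {fst, \<lambda>T. fst (snd T), \<lambda>T. snd (snd T)}" for sel :: "'a triple \<Rightarrow> 'a mat3" and i j
  proof -
    have "sel (lin_family n Ts v) $ i $ j = (\<Sum>k<n. v k * sel (Ts k) $ i $ j)" for v
      using that by (auto simp: lin_family_def map_triple_def scale_mat_def fst_sum snd_sum)
    moreover have "polyfun n (\<lambda>v. \<Sum>k<n. v k * sel (Ts k) $ i $ j)"
      by (intro polyfun_sum polyfun_mult polyfun_var polyfun_const) auto
    ultimately show ?thesis by simp
  qed
  from gen show ?case
    unfolding coord_funs_def
    by (auto intro: entry simp: fst_sum snd_sum)
qed (auto intro: polyfun_const polyfun_add polyfun_mult)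

lemma polyfun_lin_family_hom_invariant:
  "hom_invariant e g \<Longrightarrow> polyfun n (\<lambda>v. g (lin_family n Ts v :: 'a::field_char_0 triple))"
  by (simp add: hom_invariant_def polyfun_lin_family)

lemma two_power_eq_iff: "(2::'a::field_char_0) ^ m = 2 ^ n \<longleftrightarrow> m = n"
proof
  assume "(2::'a) ^ m = 2 ^ n"
  then have "of_nat (2 ^ m) = (of_nat (2 ^ n) :: 'a)"
    by simp
  then show "m = n"
    by (simp only: of_nat_eq_iff) simp
qed simp

lemma pcoeff_lin_family_degree:
  fixes g :: "'a::field_char_0 triple \<Rightarrow> 'a"
  assumes g: "hom_invariant e g" and nil: "\<And>v. lin_family n Ts v \<in> nil_triples"
    and a: "length a = n" "sum_list a \<noteq> e"
  shows "pcoeff n (\<lambda>v. g (lin_family n Ts v)) a = 0"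
proof -
  let ?\<phi> = "\<lambda>v. g (lin_family n Ts v)"
  have \<phi>: "polyfun n ?\<phi>"
    using g by (rule polyfun_lin_family_hom_invariant)
  have "(\<lambda>v. ?\<phi> (\<lambda>i. 2 * v i)) = (\<lambda>v. 2 ^ e * ?\<phi> v)"
    using g nil by (simp add: hom_invariant_scale flip: scale_lin_family)
  then have "pcoeff n (\<lambda>v. ?\<phi> (\<lambda>i. 2 * v i)) a = pcoeff n (\<lambda>v. 2 ^ e * ?\<phi> v) a"
    by (rule arg_cong)
  then have "pcoeff n ?\<phi> a * eval_monom (\<lambda>_. 2) a = 2 ^ e * pcoeff n ?\<phi> a"
    by (simp only: pcoeff_scaled[OF \<phi> a(1)] pcoeff_smult[OF \<phi>])
  then have "pcoeff n ?\<phi> a * (2 ^ sum_list a - 2 ^ e) = 0"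
    by (simp add: eval_monom_const algebra_simps)
  then show ?thesis
    using a(2) by (simp add: two_power_eq_iff)
qed

lemma pcoeff_lin_family_conj:
  fixes g :: "'a::field_char_0 triple \<Rightarrow> 'a"
  assumes g: "hom_invariant e g" and nil: "\<And>v. lin_family n Ts' v \<in> nil_triples"
    and PQ: "P ** Q = mat 1" and a: "length a = n"
    and conj: "\<And>k. k < n \<Longrightarrow> a ! k \<noteq> 0 \<Longrightarrow> Ts k = map_triple (\<lambda>A. P ** A ** Q) (Ts' k)"
  shows "pcoeff n (\<lambda>v. g (lin_family n Ts v)) a = pcoeff n (\<lambda>v. g (lin_family n Ts' v)) a"
proof (rule pcoeff_eq_on_support[OF _ _ a])
  fix v :: "nat \<Rightarrow> 'a" assume supp: "\<forall>i<n. a ! i = 0 \<longrightarrow> v i = 0"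
  have "lin_family n Ts v = lin_family n (\<lambda>k. map_triple (\<lambda>A. P ** A ** Q) (Ts' k)) v"
    by (rule lin_family_cong_support) (use conj supp in blast)
  then show "g (lin_family n Ts v) = g (lin_family n Ts' v)"
    using hom_invariant_conj[OF g nil PQ] by (simp add: conj_lin_family)
qed (use g in \<open>simp_all add: polyfun_lin_family_hom_invariant\<close>)

lemma pcoeff_lin_family_torus:
  fixes g :: "'a::field_char_0 triple \<Rightarrow> 'a"
  assumes g: "hom_invariant e g" and nil: "\<And>v. lin_family n Ts v \<in> nil_triples"
    and PQ: "P ** Q = mat 1" and a: "length a = n"
    and torus: "\<And>k. k < n \<Longrightarrow> a ! k \<noteq> 0 \<Longrightarrow>
      map_triple (\<lambda>A. P ** A ** Q) (Ts k) = map_triple (scale_mat (s k)) (Ts k)"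
  shows "pcoeff n (\<lambda>v. g (lin_family n Ts v)) a * eval_monom s a = pcoeff n (\<lambda>v. g (lin_family n Ts v)) a"
proof -
  have "pcoeff n (\<lambda>v. g (lin_family n Ts v)) a * eval_monom s a
      = pcoeff n (\<lambda>v. g (lin_family n Ts (\<lambda>k. s k * v k))) a"
    using pcoeff_scaled[OF polyfun_lin_family_hom_invariant[OF g] a] by simp
  also have "\<dots> = pcoeff n (\<lambda>v. g (lin_family n (\<lambda>k. map_triple (scale_mat (s k)) (Ts k)) v)) a"
    by (simp add: lin_family_scaled)
  also have "\<dots> = pcoeff n (\<lambda>v. g (lin_family n Ts v)) a"
    by (rule pcoeff_lin_family_conj[OF g nil PQ a]) (simp add: torus)
  finally show ?thesis .
qed

section \<open>Traces of words\<close>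

definition trace_word :: "nat list \<Rightarrow> 'a::field triple \<Rightarrow> 'a" where
  "trace_word w T = trace (foldl (\<lambda>A k. A ** triple_nth T k) (mat 1) w)"

lemma trace_word_poly_funs: "trace_word w \<in> (poly_funs :: ('a::field triple \<Rightarrow> 'a) set)"
proof -
  have entries: "(\<lambda>T. foldl (\<lambda>A k. A ** triple_nth T k) (A0 T) w $ i $ j) \<in> poly_funs"
    if "\<And>i j. (\<lambda>T. A0 T $ i $ j) \<in> (poly_funs :: ('a triple \<Rightarrow> 'a) set)" for A0 i j
    using that
  proof (induction w arbitrary: A0)
    case (Cons k w)
    have "(\<lambda>T. triple_nth T k $ i $ j) \<in> (coord_funs :: ('a triple \<Rightarrow> 'a) set)" for i j
      by (cases "k = 0"; cases "k = 1") (auto simp: coord_funs_def triple_nth_def)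
    then have "(\<lambda>T. triple_nth T k $ i $ j) \<in> (poly_funs :: ('a triple \<Rightarrow> 'a) set)" for i j
      unfolding poly_funs_def by (rule gen_alg.gen)
    then have "(\<lambda>T. (A0 T ** triple_nth T k) $ i $ j) \<in> (poly_funs :: ('a triple \<Rightarrow> 'a) set)" for i j
      using Cons.prems unfolding poly_funs_def
      by (auto simp: matrix_matrix_mult_def sum_3 intro!: gen_alg.add gen_alg.mult)
    then show ?case
      using Cons.IH by simp
  qed simp
  have "(\<lambda>T. mat 1 $ i $ j) \<in> (poly_funs :: ('a triple \<Rightarrow> 'a) set)" for i j
    unfolding poly_funs_def by (rule gen_alg.const)
  from entries[OF this] show ?thesis
    unfolding poly_funs_def trace_word_def trace_def sum_3
    by (intro gen_alg.add) (simp_all add: poly_funs_def)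
qed

lemma foldl_conj:
  fixes P Q :: "'a::field mat3"
  assumes "Q ** P = mat 1"
  shows "foldl (\<lambda>A k. A ** (P ** X k ** Q)) (P ** A0 ** Q) w = P ** foldl (\<lambda>A k. A ** X k) A0 w ** Q"
proof -
  have cancel: "M ** Q ** P = M" for M :: "'a mat3"
    by (simp add: assms flip: matrix_mul_assoc)
  show ?thesis
  proof (induction w arbitrary: A0)
    case (Cons k w)
    have "P ** A0 ** Q ** (P ** X k ** Q) = P ** (A0 ** X k) ** Q"
      by (simp add: matrix_mul_assoc cancel)
    then show ?case
      by (simp only: foldl_Cons Cons.IH)
  qed simp
qed

lemma foldl_scale:
  "foldl (\<lambda>A k. A ** scale_mat (s k) (X k)) (scale_mat c A0) w
    = scale_mat (c * (\<Prod>k\<leftarrow>w. s k)) (foldl (\<lambda>A k. A ** X k) A0 w)"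
  by (induction w arbitrary: c A0) (simp_all add: mult_ac)

lemma hom_invariant_trace_word: "hom_invariant (length w) (trace_word w :: 'a::field triple \<Rightarrow> 'a)"
  unfolding hom_invariant_def
proof (intro conjI allI impI trace_word_poly_funs)
  fix P :: "'a mat3" and T :: "'a triple"
  assume "invertible P"
  then obtain Q where PQ: "P ** Q = mat 1" and QP: "Q ** P = mat 1"
    unfolding invertible_def by blast
  have "trace_word w (conj_triple P T) = trace (P ** foldl (\<lambda>A k. A ** triple_nth T k) (mat 1) w ** Q)"
    using foldl_conj[OF QP, of "triple_nth T" "mat 1" w]
    by (simp add: trace_word_def conj_triple_eq[OF PQ] PQ)
  also have "\<dots> = trace_word w T"
    by (simp add: trace_word_def trace_mul_sym[of _ Q] matrix_mul_assoc QP)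
  finally show "trace_word w (conj_triple P T) = trace_word w T" .
next
  fix t :: 'a and T :: "'a triple"
  show "trace_word w (scale_triple t T) = t ^ length w * trace_word w T"
    using foldl_scale[of "\<lambda>_. t" "triple_nth T" 1 "mat 1" w]
    by (simp add: trace_word_def trace_scale_mat scale_triple_eq map_replicate_const)
qed

lemma hom_invariant_lincomb:
  assumes f: "hom_invariant d f" and g: "hom_invariant d g"
  shows "hom_invariant d (\<lambda>T. a * f T + b * g T)"
  unfolding hom_invariant_def
proof (intro conjI allI impI)
  show "(\<lambda>T. a * f T + b * g T) \<in> poly_funs"
    using f g unfolding hom_invariant_def poly_funs_def
    by (intro gen_alg.add gen_alg.mult gen_alg.const) simp_all
qed (simp_all add: hom_invariantD[OF f] hom_invariantD[OF g] algebra_simps)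

section \<open>Test families with one matrix in each slot\<close>

definition mk_mat3 :: "'a \<Rightarrow> 'a \<Rightarrow> 'a \<Rightarrow> 'a \<Rightarrow> 'a \<Rightarrow> 'a \<Rightarrow> 'a \<Rightarrow> 'a \<Rightarrow> 'a \<Rightarrow> 'a::field mat3" where
  "mk_mat3 a11 a12 a13 a21 a22 a23 a31 a32 a33 =
     vector [vector [a11, a12, a13], vector [a21, a22, a23], vector [a31, a32, a33]]"

lemma mk_mat3_nth:
  "mk_mat3 a11 a12 a13 a21 a22 a23 a31 a32 a33 $ 1 $ 1 = a11"
  "mk_mat3 a11 a12 a13 a21 a22 a23 a31 a32 a33 $ 1 $ 2 = a12"
  "mk_mat3 a11 a12 a13 a21 a22 a23 a31 a32 a33 $ 1 $ 3 = a13"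
  "mk_mat3 a11 a12 a13 a21 a22 a23 a31 a32 a33 $ 2 $ 1 = a21"
  "mk_mat3 a11 a12 a13 a21 a22 a23 a31 a32 a33 $ 2 $ 2 = a22"
  "mk_mat3 a11 a12 a13 a21 a22 a23 a31 a32 a33 $ 2 $ 3 = a23"
  "mk_mat3 a11 a12 a13 a21 a22 a23 a31 a32 a33 $ 3 $ 1 = a31"
  "mk_mat3 a11 a12 a13 a21 a22 a23 a31 a32 a33 $ 3 $ 2 = a32"
  "mk_mat3 a11 a12 a13 a21 a22 a23 a31 a32 a33 $ 3 $ 3 = a33"
  by (simp_all add: mk_mat3_def)

lemma mk_mat3_simps:
  "mk_mat3 a11 a12 a13 a21 a22 a23 a31 a32 a33 ** mk_mat3 b11 b12 b13 b21 b22 b23 b31 b32 b33 =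
   mk_mat3 (a11*b11 + a12*b21 + a13*b31) (a11*b12 + a12*b22 + a13*b32) (a11*b13 + a12*b23 + a13*b33)
       (a21*b11 + a22*b21 + a23*b31) (a21*b12 + a22*b22 + a23*b32) (a21*b13 + a22*b23 + a23*b33)
       (a31*b11 + a32*b21 + a33*b31) (a31*b12 + a32*b22 + a33*b32) (a31*b13 + a32*b23 + a33*b33)"
  "mk_mat3 a11 a12 a13 a21 a22 a23 a31 a32 a33 + mk_mat3 b11 b12 b13 b21 b22 b23 b31 b32 b33 =
   mk_mat3 (a11+b11) (a12+b12) (a13+b13) (a21+b21) (a22+b22) (a23+b23) (a31+b31) (a32+b32) (a33+b33)"
  "scale_mat c (mk_mat3 a11 a12 a13 a21 a22 a23 a31 a32 a33) =
   mk_mat3 (c*a11) (c*a12) (c*a13) (c*a21) (c*a22) (c*a23) (c*a31) (c*a32) (c*a33)"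
  "trace (mk_mat3 a11 a12 a13 a21 a22 a23 a31 a32 a33) = a11 + a22 + a33"
  "mk_mat3 a11 a12 a13 a21 a22 a23 a31 a32 a33 = mk_mat3 b11 b12 b13 b21 b22 b23 b31 b32 b33 \<longleftrightarrow>
   a11 = b11 \<and> a12 = b12 \<and> a13 = b13 \<and> a21 = b21 \<and> a22 = b22 \<and> a23 = b23 \<and> a31 = b31 \<and> a32 = b32 \<and> a33 = b33"
  "(0::'a::field mat3) = mk_mat3 0 0 0 0 0 0 0 0 0"
  "(mat 1::'a::field mat3) = mk_mat3 1 0 0 0 1 0 0 0 1"
  by (simp_all add: vec_eq_iff forall_3 mk_mat3_nth matrix_matrix_mult_def sum_3 scale_mat_def trace_def
      mat_def)

lemma less_3_iff: "(k::nat) < 3 \<longleftrightarrow> k = 0 \<or> k = 1 \<or> k = 2"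
  by auto

definition slot :: "nat \<Rightarrow> 'a::field mat3 \<Rightarrow> 'a triple" where
  "slot k A = (if k = 0 then A else 0, if k = 1 then A else 0, if k = 2 then A else 0)"

lemma slot_add: "slot k A + slot k B = slot k (A + B)"
  by (simp add: slot_def)

lemma map_triple_slot: "f 0 = 0 \<Longrightarrow> map_triple f (slot k A) = slot k (f A)"
  by (simp add: slot_def)

definition slot_family :: "(nat \<Rightarrow> 'a::field mat3) \<Rightarrow> (nat \<Rightarrow> 'a) \<Rightarrow> 'a triple" where
  "slot_family M = lin_family 3 (\<lambda>k. slot k (M k))"

lemma slot_family_eq:
  "slot_family M v = (scale_mat (v 0) (M 0), scale_mat (v 1) (M 1), scale_mat (v 2) (M 2))"
  by (simp add: slot_family_def lin_family_def slot_def eval_nat_numeral lessThan_Suc)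

lemma triple_nth_slot_family: "k < 3 \<Longrightarrow> triple_nth (slot_family M v) k = scale_mat (v k) (M k)"
  by (auto simp: slot_family_eq triple_nth_def less_Suc_eq eval_nat_numeral)

lemma slot_family_nil:
  "(\<And>k. k < 3 \<Longrightarrow> mat_nilpotent (M k)) \<Longrightarrow> slot_family M v \<in> nil_triples"
  by (simp add: slot_family_eq nil_triples_def mat_nilpotent_scale_mat)

lemma trace_word_slot_family:
  assumes "\<forall>k\<in>set w. k < 3"
  shows "trace_word w (slot_family M v) = (\<Prod>k\<leftarrow>w. v k) * trace_word w (M 0, M 1, M 2)"
proof -
  have "triple_nth (M 0, M 1, M 2) k = M k" if "k < 3" for k
    using that by (auto simp: triple_nth_def less_3_iff)
  then have "foldl (\<lambda>A k. A ** triple_nth (slot_family M v) k) (scale_mat 1 (mat 1)) w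
      = foldl (\<lambda>A k. A ** scale_mat (v k) (triple_nth (M 0, M 1, M 2) k)) (scale_mat 1 (mat 1)) w"
    using assms by (intro foldl_cong) (simp_all add: triple_nth_slot_family)
  then show ?thesis
    using foldl_scale[of v "triple_nth (M 0, M 1, M 2)" 1 "mat 1" w]
    by (simp add: trace_word_def trace_scale_mat)
qed

definition absent_below :: "nat \<Rightarrow> (nat \<Rightarrow> 'a::field_char_0 mat3) \<Rightarrow> nat list \<Rightarrow> bool" where
  "absent_below d M a \<longleftrightarrow>
     (\<forall>e g. e < d \<longrightarrow> hom_invariant e g \<longrightarrow> pcoeff 3 (\<lambda>v. g (slot_family M v)) a = 0)"

lemma absent_below_length_neq: "length a \<noteq> 3 \<Longrightarrow> absent_below d M a"
  unfolding absent_below_def slot_family_def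
  by (auto intro: pcoeff_eq_0_if_length_neq polyfun_lin_family_hom_invariant)

lemma absent_below_degree:
  assumes "\<And>k. k < 3 \<Longrightarrow> mat_nilpotent (M k)" "length a = 3" "d \<le> sum_list a"
  shows "absent_below d M a"
  unfolding absent_below_def slot_family_def
  using assms slot_family_nil[of M, unfolded slot_family_def]
  by (auto intro!: pcoeff_lin_family_degree)

lemma absent_below_torus:
  assumes nil: "\<And>k. k < 3 \<Longrightarrow> mat_nilpotent (M k)" and PQ: "P ** Q = mat 1" and a: "length a = 3"
    and torus: "\<And>k. k < 3 \<Longrightarrow> a ! k \<noteq> 0 \<Longrightarrow> P ** M k ** Q = scale_mat (s k) (M k)"
    and s: "eval_monom s a \<noteq> 1"
  shows "absent_below d M a"
  unfolding absent_below_def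
proof (intro allI impI)
  fix e and g :: "'a triple \<Rightarrow> 'a"
  assume "hom_invariant e g"
  then have "pcoeff 3 (\<lambda>v. g (slot_family M v)) a * eval_monom s a = pcoeff 3 (\<lambda>v. g (slot_family M v)) a"
    unfolding slot_family_def
    by (rule pcoeff_lin_family_torus[OF _ _ PQ a])
      (use slot_family_nil[OF nil] torus in \<open>simp_all add: slot_family_def map_triple_slot\<close>)
  then show "pcoeff 3 (\<lambda>v. g (slot_family M v)) a = 0"
    using s by (metis mult_cancel_left1 mult.commute)
qed

lemma absent_below_conj:
  assumes nil: "\<And>k. k < 3 \<Longrightarrow> mat_nilpotent (M' k)" and PQ: "P ** Q = mat 1" and a: "length a = 3"
    and conj: "\<And>k. k < 3 \<Longrightarrow> a ! k \<noteq> 0 \<Longrightarrow> M k = P ** M' k ** Q"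
    and "absent_below d M' a"
  shows "absent_below d M a"
  using \<open>absent_below d M' a\<close> unfolding absent_below_def
proof (intro allI impI)
  fix e and g :: "'a triple \<Rightarrow> 'a"
  assume "\<forall>e g. e < d \<longrightarrow> hom_invariant e g \<longrightarrow> pcoeff 3 (\<lambda>v. g (slot_family M' v)) a = 0"
    and "e < d" "hom_invariant e g"
  moreover have "pcoeff 3 (\<lambda>v. g (slot_family M v)) a = pcoeff 3 (\<lambda>v. g (slot_family M' v)) a"
    unfolding slot_family_def
    by (rule pcoeff_lin_family_conj[OF \<open>hom_invariant e g\<close> _ PQ a])
      (use slot_family_nil[OF nil] conj in \<open>simp_all add: slot_family_def map_triple_slot\<close>)
  ultimately show "pcoeff 3 (\<lambda>v. g (slot_family M v)) a = 0"
    by simp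
qed

lemma not_decomposable_slot_family:
  fixes f :: "'a::field_char_0 triple \<Rightarrow> 'a"
  assumes nil: "\<And>k. k < 3 \<Longrightarrow> mat_nilpotent (M k)"
    and f: "\<And>v. f (slot_family M v) = c * eval_monom v m" "c \<noteq> 0" "length m = 3"
    and W: "split_closed W" "[0, 0, 0] \<notin> W" "m \<in> W" "\<And>a. a \<in> W \<Longrightarrow> absent_below d M a"
  shows "\<not> decomposable d f"
proof (rule not_decomposable_if_monomial_absent[OF _ _ f, where W = W])
  show "slot_family M v \<in> nil_triples" for v
    using nil by (rule slot_family_nil)
  show "polyfun 3 (\<lambda>v. g (slot_family M v))" if "g \<in> poly_funs" for g
    using that by (simp add: slot_family_def polyfun_lin_family)
  show "split_closed W" "replicate 3 0 \<notin> W" "m \<in> W"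
    using W by (simp_all add: numeral_3_eq_3)
qed (use W(4) in \<open>auto simp: absent_below_def\<close>)

definition upper_shift :: "'a::field mat3" where
  "upper_shift = mk_mat3 0 1 0 0 0 1 0 0 0"

definition lower_shift :: "'a::field mat3" where
  "lower_shift = mk_mat3 0 0 0 (-1) 0 0 0 1 0"

lemma upper_shift_nilpotent: "mat_nilpotent upper_shift"
  by (rule mat_nilpotent_cube) (simp add: upper_shift_def mk_mat3_simps)

lemma lower_shift_nilpotent: "mat_nilpotent lower_shift"
  by (rule mat_nilpotent_cube) (simp add: lower_shift_def mk_mat3_simps)

lemma lower_shift_dilation:
  "mk_mat3 1 0 0 0 2 0 0 0 4 ** lower_shift ** mk_mat3 1 0 0 0 (1/2) 0 0 0 (1/4)
    = scale_mat 2 (lower_shift :: 'a::field_char_0 mat3)"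
  by (simp add: lower_shift_def mk_mat3_simps)

lemma lin_family_4:
  "lin_family 4 Ts u = map_triple (scale_mat (u 0)) (Ts 0) + map_triple (scale_mat (u 1)) (Ts 1)
    + map_triple (scale_mat (u 2)) (Ts 2) + map_triple (scale_mat (u 3)) (Ts 3)"
  by (simp add: lin_family_def eval_nat_numeral lessThan_Suc add_ac)

text \<open>The family \<open>(u\<^sub>0 E\<^sub>1\<^sub>2 + u\<^sub>1 E\<^sub>2\<^sub>3, -u\<^sub>2 E\<^sub>2\<^sub>1 + u\<^sub>3 E\<^sub>3\<^sub>2)\<close> in slots \<open>i\<close> and \<open>j\<close>; identifying
  \<open>u\<^sub>0, u\<^sub>1\<close> and \<open>u\<^sub>2, u\<^sub>3\<close> gives back \<open>upper_shift\<close> and \<open>lower_shift\<close>.\<close>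
definition split_pair_family :: "nat \<Rightarrow> nat \<Rightarrow> nat \<Rightarrow> 'a::field triple" where
  "split_pair_family i j k =
     [slot i (mk_mat3 0 1 0 0 0 0 0 0 0), slot i (mk_mat3 0 0 0 0 0 1 0 0 0),
      slot j (mk_mat3 0 0 0 (-1) 0 0 0 0 0), slot j (mk_mat3 0 0 0 0 0 0 0 1 0)] ! k"

lemma slot_pair_nil:
  "i \<noteq> j \<Longrightarrow> mat_nilpotent A \<Longrightarrow> mat_nilpotent B \<Longrightarrow> slot i A + slot j B \<in> nil_triples"
  using mat_nilpotent_cube[of "0 :: 'a::field mat3"] by (auto simp: slot_def nil_triples_def)

lemma lin_family_split_pair_family:
  "lin_family 4 (split_pair_family i j) u
    = slot i (mk_mat3 0 (u 0) 0 0 0 (u 1) 0 0 0) + slot j (mk_mat3 0 0 0 (- u 2) 0 0 0 (u 3) 0)"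
  by (simp add: lin_family_4 split_pair_family_def map_triple_slot slot_add add.assoc mk_mat3_simps)

lemma split_pair_family_nil:
  "i \<noteq> j \<Longrightarrow> lin_family 4 (split_pair_family i j) u \<in> (nil_triples :: 'a::field triple set)"
  unfolding lin_family_split_pair_family
  by (intro slot_pair_nil mat_nilpotent_cube) (simp_all add: mk_mat3_simps)

lemma slot_family_pair:
  assumes "i < 3" "j < 3" "i \<noteq> j"
  shows "slot_family (\<lambda>k. if k = i then A else if k = j then B else 0) v
    = slot i (scale_mat (v i) A) + slot j (scale_mat (v j) B)"
  using assms by (auto simp: slot_family_eq slot_def less_Suc_eq eval_nat_numeral)

lemma slot_family_split_pair:
  assumes "i < 3" "j < 3" "i \<noteq> j"
  shows "slot_family (\<lambda>k. if k = i then upper_shift else if k = j then lower_shift else 0) v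
    = lin_family 4 (split_pair_family i j) (\<lambda>k. 1 * v (if k < 2 then i else j))"
  by (simp add: slot_family_pair[OF assms] lin_family_split_pair_family upper_shift_def lower_shift_def
      mk_mat3_simps)

lemma length_4_conv: "length m = 4 \<longleftrightarrow> (\<exists>p q r s. m = [p, q, r, s])"
  by (auto simp: numeral_eq_Suc length_Suc_conv)

lemma rename_exps_4:
  "rename_exps n' \<pi> [p, q, r, s] = map (\<lambda>j. (if \<pi> 0 = j then p else 0) + (if \<pi> 1 = j then q else 0)
     + (if \<pi> 2 = j then r else 0) + (if \<pi> 3 = j then s else 0)) [0..<n']"
  by (simp add: rename_exps_sum eval_nat_numeral lessThan_Suc add_ac)

text \<open>Conjugation by \<open>diag(2, 1, 1)\<close> rescales the four members of the family by \<open>2, 1, 1/2, 1\<close>.\<close>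
lemma pcoeff_split_pair_family_cross:
  fixes g :: "'a::field_char_0 triple \<Rightarrow> 'a"
  assumes g: "hom_invariant e g" and "i \<noteq> j"
  shows "pcoeff 4 (\<lambda>u. g (lin_family 4 (split_pair_family i j) u)) [1,0,0,1] = 0"
    and "pcoeff 4 (\<lambda>u. g (lin_family 4 (split_pair_family i j) u)) [0,1,1,0] = 0"
proof -
  let ?\<phi> = "\<lambda>u. g (lin_family 4 (split_pair_family i j) u)" and ?s = "\<lambda>k. [2, 1, 1/2, 1::'a] ! k"
  have torus: "pcoeff 4 ?\<phi> m * eval_monom ?s m = pcoeff 4 ?\<phi> m" if "length m = 4" for m
    by (rule pcoeff_lin_family_torus[OF g split_pair_family_nil[OF \<open>i \<noteq> j\<close>] _ that,
          where P = "mk_mat3 2 0 0 0 1 0 0 0 1" and Q = "mk_mat3 (1/2) 0 0 0 1 0 0 0 1"])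
      (auto simp: mk_mat3_simps less_Suc_eq eval_nat_numeral split_pair_family_def map_triple_slot)
  show "pcoeff 4 ?\<phi> [1,0,0,1] = 0"
    using torus[of "[1,0,0,1]"] by simp
  show "pcoeff 4 ?\<phi> [0,1,1,0] = 0"
    using torus[of "[0,1,1,0]"] by simp
qed

text \<open>Conjugation by a cyclic permutation matrix maps \<open>E\<^sub>2\<^sub>3\<close> to \<open>E\<^sub>1\<^sub>2\<close> and \<open>E\<^sub>3\<^sub>2\<close> to \<open>E\<^sub>2\<^sub>1\<close>.\<close>
lemma pcoeff_split_pair_family_diagonal:
  fixes g :: "'a::field_char_0 triple \<Rightarrow> 'a"
  assumes g: "hom_invariant e g" and "i \<noteq> j"
  shows "pcoeff 4 (\<lambda>u. g (lin_family 4 (split_pair_family i j) u)) [1,0,1,0]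
    = - pcoeff 4 (\<lambda>u. g (lin_family 4 (split_pair_family i j) u)) [0,1,0,1]"
proof -
  let ?Ts = "split_pair_family i j :: nat \<Rightarrow> 'a triple"
  let ?Ts' = "\<lambda>k. [?Ts 1, (0, 0, 0), map_triple (scale_mat (-1)) (?Ts 3), (0, 0, 0)] ! k"
  let ?c = "\<lambda>k. [0, 1, 0, -1::'a] ! k" and ?\<pi> = "\<lambda>k::nat. if k < 2 then 0 else 2::nat"
  have Ts': "lin_family 4 ?Ts' u = lin_family 4 ?Ts (\<lambda>k. ?c k * u (?\<pi> k))" for u
    by (simp add: lin_family_4 map_triple_def)
  have nil': "lin_family 4 ?Ts' u \<in> nil_triples" for u
    unfolding Ts' using \<open>i \<noteq> j\<close> by (rule split_pair_family_nil)
  have "pcoeff 4 (\<lambda>u. g (lin_family 4 ?Ts u)) [1,0,1,0] = pcoeff 4 (\<lambda>u. g (lin_family 4 ?Ts' u)) [1,0,1,0]"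
    by (rule pcoeff_lin_family_conj[OF g nil' _ _, where P = "mk_mat3 0 1 0 0 0 1 1 0 0"
          and Q = "mk_mat3 0 0 1 1 0 0 0 1 0"])
      (auto simp: mk_mat3_simps less_Suc_eq eval_nat_numeral split_pair_family_def map_triple_slot)
  also have "\<dots> = (\<Sum>m\<in>{[0,1,0,1]}. pcoeff 4 (\<lambda>u. g (lin_family 4 ?Ts u)) m * eval_monom ?c m)"
    unfolding Ts'
  proof (rule pcoeff_subst[OF polyfun_lin_family_hom_invariant[OF g]])
    fix m :: "nat list"
    assume "length m = 4" "rename_exps 4 ?\<pi> m = [1,0,1,0]" "eval_monom ?c m \<noteq> 0"
    then show "m \<in> {[0,1,0,1]}"
      by (auto simp: length_4_conv rename_exps_4 upt_rec)
  qed (auto simp: rename_exps_4 upt_rec)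
  finally show ?thesis
    by simp
qed

lemma absent_below_pair:
  assumes ij: "i < 3" "j < 3" "i \<noteq> j" and M: "M i = upper_shift" "M j = lower_shift"
  shows "absent_below d M (map (\<lambda>l. if l = i \<or> l = j then 1 else 0) [0..<3])"
proof -
  let ?b = "map (\<lambda>l. if l = i \<or> l = j then 1 else 0) [0..<3]"
  let ?M0 = "\<lambda>k. if k = i then upper_shift else if k = j then lower_shift else (0 :: 'a mat3)"
  have nil0: "mat_nilpotent (?M0 k)" for k
    by (simp add: upper_shift_nilpotent lower_shift_nilpotent mat_nilpotent_zero)
  have "absent_below d ?M0 ?b"
    unfolding absent_below_def
  proof (intro allI impI)
    fix e and g :: "'a triple \<Rightarrow> 'a"
    assume g: "hom_invariant e g"
    let ?\<phi> = "\<lambda>u. g (lin_family 4 (split_pair_family i j) u)" and ?\<pi> = "\<lambda>k::nat. if k < 2 then i else j"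
    let ?S = "{[1,0,1,0], [1,0,0,1], [0,1,1,0], [0,1,0,1]}"
    have "pcoeff 3 (\<lambda>v. g (slot_family ?M0 v)) ?b = (\<Sum>m\<in>?S. pcoeff 4 ?\<phi> m * eval_monom (\<lambda>_. 1) m)"
      unfolding slot_family_split_pair[OF ij]
    proof (rule pcoeff_subst[OF polyfun_lin_family_hom_invariant[OF g]])
      fix m :: "nat list"
      assume "length m = 4" and ren: "rename_exps 3 ?\<pi> m = ?b"
      then obtain p q r s where m: "m = [p, q, r, s]"
        by (auto simp: length_4_conv)
      have "p + q = 1" "r + s = 1"
        using arg_cong[OF ren, of "\<lambda>xs. xs ! i"] arg_cong[OF ren, of "\<lambda>xs. xs ! j"] ij
        by (simp_all add: m rename_exps_4)
      then show "m \<in> ?S"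
        by (auto simp: m add_is_1)
    qed (use ij in \<open>auto simp: rename_exps_4 intro!: map_cong\<close>)
    also have "\<dots> = 0"
      using pcoeff_split_pair_family_cross[OF g \<open>i \<noteq> j\<close>] pcoeff_split_pair_family_diagonal[OF g \<open>i \<noteq> j\<close>]
      by (simp add: eval_monom_const)
    finally show "pcoeff 3 (\<lambda>v. g (slot_family ?M0 v)) ?b = 0" .
  qed
  then show ?thesis
    by (rule absent_below_conj[OF nil0, where P = "mat 1" and Q = "mat 1", rotated -1])
      (use ij M in auto)
qed

definition basic_exps :: "nat list \<Rightarrow> bool" where
  "basic_exps a \<longleftrightarrow> (\<exists>x y z. a = [x, y, z] \<and> (z = 0 \<and> x \<noteq> y \<or> x = 0 \<and> y = 0 \<and> z \<noteq> 0 \<or> a = [1, 1, 0]))"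

lemma basic_exps_iff [simp]:
  "basic_exps [x, y, z] \<longleftrightarrow> z = 0 \<and> x \<noteq> y \<or> x = 0 \<and> y = 0 \<and> z \<noteq> 0 \<or> [x, y, z] = [1, 1, 0]"
  by (auto simp: basic_exps_def)

lemma split_closed_basic: "split_closed {a. basic_exps a}"
  unfolding split_closed_def
proof (intro ballI allI impI)
  fix a b
  assume asm: "a \<in> {a. basic_exps a}" "list_all2 (\<le>) b a" "b \<noteq> replicate (length a) 0" "b \<noteq> a"
  then obtain x y z where a: "a = [x, y, z]"
    by (auto simp: basic_exps_def)
  with asm obtain p q r where b: "b = [p, q, r]" "p \<le> x" "q \<le> y" "r \<le> z"
    by (auto simp: list_all2_Cons2)
  have nz: "[p, q, r] \<noteq> [0, 0, 0]" "[p, q, r] \<noteq> [x, y, z]"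
    using asm a b by auto
  consider "z = 0" "x \<noteq> y" | "x = 0" "y = 0" "z \<noteq> 0" | "x = 1" "y = 1" "z = 0"
    using asm a by auto
  then have "basic_exps [p, q, r] \<or> basic_exps [x - p, y - q, z - r]"
  proof cases
    case 1
    then show ?thesis
      using b by (cases "p = q") auto
  next
    case 2
    then show ?thesis
      using b nz by auto
  next
    case 3
    then show ?thesis
      using b nz by (auto simp: le_Suc_eq)
  qed
  then show "b \<in> {a. basic_exps a} \<or> map2 (-) a b \<in> {a. basic_exps a}"
    by (simp add: a b)
qed

lemma half_power_two_power_eq_1_iff: "(1/2::'a::field_char_0) ^ x * 2 ^ y = 1 \<longleftrightarrow> x = y"
proof -
  have "(1/2::'a) ^ x * 2 ^ y = 2 ^ y / 2 ^ x"
    by (simp add: power_one_over)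
  then show ?thesis
    using two_power_eq_iff[of y x, where 'a = 'a] by auto
qed

lemma absent_below_basic:
  fixes M :: "nat \<Rightarrow> 'a::field_char_0 mat3"
  assumes M: "M 0 = upper_shift" "M 1 = lower_shift" "mat_nilpotent (M 2)"
    and C: "P ** Q = mat 1" "P ** M 2 ** Q = scale_mat 2 (M 2)"
    and a: "basic_exps a"
  shows "absent_below d M a"
proof -
  have nil: "mat_nilpotent (M k)" if "k < 3" for k
    using that M by (auto simp: less_3_iff upper_shift_nilpotent lower_shift_nilpotent)
  obtain x y z where a3: "a = [x, y, z]"
    using a by (auto simp: basic_exps_def)
  consider "z = 0" "x \<noteq> y" | "x = 0" "y = 0" "z \<noteq> 0" | "a = [1, 1, 0]"
    using a a3 by auto
  then show ?thesis
  proof cases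
    case 1
    show ?thesis
    proof (rule absent_below_torus[OF nil, where P = "mk_mat3 1 0 0 0 2 0 0 0 4"
          and Q = "mk_mat3 1 0 0 0 (1/2) 0 0 0 (1/4)" and s = "\<lambda>k. [1/2, 2, 1] ! k"])
      show "eval_monom (\<lambda>k. [1/2, 2, 1::'a] ! k) a \<noteq> 1"
        using 1 by (simp add: a3 half_power_two_power_eq_1_iff)
    qed (use 1 M in \<open>auto simp: a3 less_3_iff mk_mat3_simps upper_shift_def lower_shift_def\<close>)
  next
    case 2
    show ?thesis
    proof (rule absent_below_torus[OF nil C(1), where s = "\<lambda>_. 2"])
      show "eval_monom (\<lambda>_. 2::'a) a \<noteq> 1"
        using 2 two_power_eq_iff[of z 0, where 'a = 'a] by (simp add: a3)
    qed (use 2 C(2) in \<open>auto simp: a3 less_3_iff\<close>)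
  next
    case 3
    then show ?thesis
      using absent_below_pair[of 0 1 M d] M by (simp add: upt_rec)
  qed
qed

section \<open>The three invariants\<close>

lemma le_2_iff: "(p::nat) \<le> 2 \<longleftrightarrow> p = 0 \<or> p = 1 \<or> p = 2"
  by auto

lemma le_3_iff: "(p::nat) \<le> 3 \<longleftrightarrow> p = 0 \<or> p = 1 \<or> p = 2 \<or> p = 3"
  by auto

lemma not_decomposable_a_family:
  fixes \<alpha>1 \<alpha>2 :: "'a::field_char_0"
  assumes C: "mat_nilpotent C" "P ** Q = mat 1" "P ** C ** Q = scale_mat 2 C"
    and c: "\<alpha>1 * trace_word [0,0,1,1,2] (upper_shift, lower_shift, C)
      + \<alpha>2 * trace_word [1,1,0,0,2] (upper_shift, lower_shift, C) \<noteq> 0"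
  shows "\<not> decomposable 5 (\<lambda>T. \<alpha>1 * trace_word [0,0,1,1,2] T + \<alpha>2 * trace_word [1,1,0,0,2] T)"
proof -
  let ?M = "\<lambda>k. [upper_shift, lower_shift, C] ! k"
  let ?W = "insert [2,2,1] {a. basic_exps a}"
  have nil: "mat_nilpotent (?M k)" if "k < 3" for k
    using that C by (auto simp: less_3_iff upper_shift_nilpotent lower_shift_nilpotent)
  show ?thesis
  proof (rule not_decomposable_slot_family[where M = ?M and W = ?W and m = "[2,2,1]"])
    show "split_closed ?W"
      by (intro split_closed_insert split_closed_basic) (auto simp: list_all2_Cons2 le_2_iff)
    show "absent_below 5 ?M a" if "a \<in> ?W" for a
      using that absent_below_basic[of ?M, OF _ _ _ C(2)] absent_below_degree[of ?M "[2,2,1]" 5, OF nil]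
      by (auto simp: C)
  qed (use nil c in \<open>auto simp: trace_word_slot_family eval_nat_numeral algebra_simps\<close>)
qed

text \<open>\<open>upper_shift\<^sup>2 lower_shift\<^sup>2 = -E\<^sub>1\<^sub>1\<close> and \<open>lower_shift\<^sup>2 upper_shift\<^sup>2 = -E\<^sub>3\<^sub>3\<close>, so the first choice
  of \<open>C\<close> only sees \<open>\<alpha>1\<close> and the second only \<open>\<alpha>2\<close>.\<close>
lemma not_decomposable_a:
  fixes \<alpha>1 \<alpha>2 :: "'a::field_char_0"
  assumes "\<alpha>1 \<noteq> 0 \<or> \<alpha>2 \<noteq> 0"
  shows "\<not> decomposable 5 (\<lambda>T. \<alpha>1 * trace_word [0,0,1,1,2] T + \<alpha>2 * trace_word [1,1,0,0,2] T)"
proof (cases "\<alpha>1 = 0")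
  case False
  show ?thesis
    by (rule not_decomposable_a_family[where C = "mk_mat3 1 1 0 (-1) (-1) 0 0 0 0"
          and P = "mk_mat3 1 (-1) 0 0 2 0 0 0 1" and Q = "mk_mat3 1 (1/2) 0 0 (1/2) 0 0 0 1"])
      (use False in \<open>simp_all add: mat_nilpotent_cube trace_word_def triple_nth_def upper_shift_def
        lower_shift_def mk_mat3_simps\<close>)
next
  case True
  show ?thesis
    by (rule not_decomposable_a_family[where C = "mk_mat3 0 0 0 0 1 1 0 (-1) (-1)"
          and P = "mk_mat3 1 0 0 0 1 (-1) 0 0 2" and Q = "mk_mat3 1 0 0 0 1 (1/2) 0 0 (1/2)"])
      (use True assms in \<open>simp_all add: mat_nilpotent_cube trace_word_def triple_nth_def upper_shift_def
        lower_shift_def mk_mat3_simps\<close>)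
qed

lemma not_decomposable_b:
  "\<not> decomposable 6 (trace_word [0,0,1,1,0,2] :: 'a::field_char_0 triple \<Rightarrow> 'a)"
proof -
  let ?M = "\<lambda>k. [upper_shift, lower_shift, lower_shift :: 'a mat3] ! k"
  let ?W = "insert [3,2,1] (insert [1,0,1] {a. basic_exps a})"
  have nil: "mat_nilpotent (?M k)" if "k < 3" for k
    using that by (auto simp: less_3_iff upper_shift_nilpotent lower_shift_nilpotent)
  show ?thesis
  proof (rule not_decomposable_slot_family[where M = ?M and W = ?W and m = "[3,2,1]"])
    show "split_closed ?W"
      by (intro split_closed_insert split_closed_basic) (auto simp: list_all2_Cons2 le_2_iff le_3_iff)
    have "absent_below 6 ?M [1,0,1]"
      using absent_below_pair[of 0 2 ?M 6] by (simp add: upt_rec)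
    moreover have "absent_below 6 ?M a" if "basic_exps a" for a
      by (rule absent_below_basic[OF _ _ _ _ _ that, where P = "mk_mat3 1 0 0 0 2 0 0 0 4"
            and Q = "mk_mat3 1 0 0 0 (1/2) 0 0 0 (1/4)"])
        (simp_all add: lower_shift_nilpotent lower_shift_dilation mk_mat3_simps)
    ultimately show "absent_below 6 ?M a" if "a \<in> ?W" for a
      using that absent_below_degree[of ?M "[3,2,1]" 6, OF nil] by auto
    show "trace_word [0,0,1,1,0,2] (slot_family ?M v)
        = trace_word [0,0,1,1,0,2] (upper_shift, lower_shift, lower_shift :: 'a mat3) * eval_monom v [3,2,1]"
      for v by (simp add: trace_word_slot_family eval_nat_numeral mult_ac)
    show "trace_word [0,0,1,1,0,2] (upper_shift, lower_shift, lower_shift :: 'a mat3) \<noteq> 0"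
      by (simp add: trace_word_def triple_nth_def upper_shift_def lower_shift_def mk_mat3_simps)
  qed (use nil in auto)
qed

lemma upper_plus_lower_shift: "upper_shift + lower_shift = (mk_mat3 0 1 0 (-1) 0 1 0 1 0 :: 'a::field mat3)"
  by (simp add: upper_shift_def lower_shift_def mk_mat3_simps)

lemma absent_below_shift_sum:
  fixes a :: "nat list"
  defines "M \<equiv> \<lambda>k. [upper_shift, lower_shift, upper_shift + lower_shift :: 'a::field_char_0 mat3] ! k"
  assumes "a \<in> insert [2,2,2] (insert [1,0,1] (insert [0,1,1] ({a. basic_exps a} \<union> {a. odd (sum_list a)})))"
  shows "absent_below 6 M a"
proof -
  let ?C = "upper_shift + lower_shift :: 'a mat3"
  note C = upper_plus_lower_shift[where 'a = 'a]
  have nil: "mat_nilpotent (M k)" "mat_nilpotent ([upper_shift, lower_shift, upper_shift :: 'a mat3] ! k)"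
    "mat_nilpotent ([upper_shift, lower_shift, lower_shift :: 'a mat3] ! k)" if "k < 3" for k
    using that upper_shift_nilpotent lower_shift_nilpotent mat_nilpotent_cube[of ?C]
    by (auto simp: M_def less_3_iff C mk_mat3_simps)
  have "absent_below 6 M a" if "basic_exps a" for a
    by (rule absent_below_basic[OF _ _ _ _ _ that, where P = "mk_mat3 1 0 0 0 (1/2) 0 (3/4) 0 (1/4)"
          and Q = "mk_mat3 1 0 0 0 2 0 (-3) 0 4"])
      (use nil(1)[of 2] in \<open>simp_all add: M_def C mk_mat3_simps\<close>)
  moreover have "absent_below 6 M a" if "odd (sum_list a)" for a
  proof (cases "length a = 3")
    case True
    show ?thesis
      by (rule absent_below_torus[OF nil(1) _ True, where P = "mk_mat3 1 0 0 0 (-1) 0 0 0 1"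
            and Q = "mk_mat3 1 0 0 0 (-1) 0 0 0 1" and s = "\<lambda>_. -1"])
        (use that in \<open>auto simp: M_def eval_monom_const less_3_iff C upper_shift_def lower_shift_def
          mk_mat3_simps\<close>)
  qed (rule absent_below_length_neq)
  \<comment> \<open>A unipotent conjugation fixing one shift carries the other one to \<open>?C\<close>.\<close>
  moreover have "absent_below 6 M [1,0,1]"
    by (rule absent_below_conj[OF nil(3), where P = "mk_mat3 1 0 1 0 1 0 0 0 1"
          and Q = "mk_mat3 1 0 (-1) 0 1 0 0 0 1"])
      (use absent_below_pair[of 0 2 "\<lambda>k. [upper_shift, lower_shift, lower_shift] ! k" 6] in
        \<open>auto simp: M_def upt_rec less_3_iff C upper_shift_def lower_shift_def mk_mat3_simps\<close>)
  moreover have "absent_below 6 M [0,1,1]"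
    by (rule absent_below_conj[OF nil(2), where P = "mk_mat3 1 0 0 0 1 0 1 0 1"
          and Q = "mk_mat3 1 0 0 0 1 0 (-1) 0 1"])
      (use absent_below_pair[of 2 1 "\<lambda>k. [upper_shift, lower_shift, upper_shift] ! k" 6] in
        \<open>auto simp: M_def upt_rec less_3_iff C upper_shift_def lower_shift_def mk_mat3_simps\<close>)
  ultimately show ?thesis
    using assms(2) absent_below_degree[of M "[2,2,2]" 6, OF nil(1)]
    by (auto simp: basic_exps_def)
qed

lemma not_decomposable_c:
  "\<not> decomposable 6 (trace_word [0,0,1,1,2,2] :: 'a::field_char_0 triple \<Rightarrow> 'a)"
proof -
  let ?C = "upper_shift + lower_shift :: 'a mat3"
  let ?M = "\<lambda>k. [upper_shift, lower_shift, ?C] ! k"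
  let ?W = "insert [2,2,2] (insert [1,0,1] (insert [0,1,1] ({a. basic_exps a} \<union> {a. odd (sum_list a)})))"
  note C = upper_plus_lower_shift[where 'a = 'a]
  show ?thesis
  proof (rule not_decomposable_slot_family[where M = ?M and W = ?W and m = "[2,2,2]"])
    show "mat_nilpotent (?M k)" if "k < 3" for k
      using that upper_shift_nilpotent lower_shift_nilpotent mat_nilpotent_cube[of ?C]
      by (auto simp: less_3_iff C mk_mat3_simps)
    show "split_closed ?W"
      by (intro split_closed_insert split_closed_Un split_closed_basic split_closed_odd)
        (auto simp: list_all2_Cons2 le_2_iff)
    show "trace_word [0,0,1,1,2,2] (slot_family ?M v)
        = trace_word [0,0,1,1,2,2] (upper_shift, lower_shift, ?C) * eval_monom v [2,2,2]"
      for v by (simp add: trace_word_slot_family eval_nat_numeral mult_ac)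
    show "trace_word [0,0,1,1,2,2] (upper_shift, lower_shift, ?C) \<noteq> 0"
      by (simp add: C trace_word_def triple_nth_def upper_shift_def lower_shift_def mk_mat3_simps)
  qed (auto intro: absent_below_shift_sum)
qed

theorem lemma3p5:
  fixes \<alpha>1 \<alpha>2 :: "'a::field_char_0"
  assumes "alg_closed TYPE('a)"
    and "\<alpha>1 \<noteq> 0 \<or> \<alpha>2 \<noteq> 0"
  shows "indecomposable (\<lambda>(Y1 :: 'a mat3, Y2 :: 'a mat3, Y3 :: 'a mat3).
            \<alpha>1 * trace (Y1 ** Y1 ** Y2 ** Y2 ** Y3) + \<alpha>2 * trace (Y2 ** Y2 ** Y1 ** Y1 ** Y3))
       \<and> indecomposable (\<lambda>(Y1 :: 'a mat3, Y2 :: 'a mat3, Y3 :: 'a mat3). trace (Y1 ** Y1 ** Y2 ** Y2 ** Y1 ** Y3))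
       \<and> indecomposable (\<lambda>(Y1 :: 'a mat3, Y2 :: 'a mat3, Y3 :: 'a mat3). trace (Y1 ** Y1 ** Y2 ** Y2 ** Y3 ** Y3))"
proof -
  have words:
    "(\<lambda>(Y1, Y2, Y3). \<alpha>1 * trace (Y1 ** Y1 ** Y2 ** Y2 ** Y3) + \<alpha>2 * trace (Y2 ** Y2 ** Y1 ** Y1 ** Y3))
      = (\<lambda>T. \<alpha>1 * trace_word [0,0,1,1,2] T + \<alpha>2 * trace_word [1,1,0,0,2] T)"
    "(\<lambda>(Y1, Y2, Y3). trace (Y1 ** Y1 ** Y2 ** Y2 ** Y1 ** Y3)) = trace_word [0,0,1,1,0,2]"
    "(\<lambda>(Y1, Y2, Y3). trace (Y1 ** Y1 ** Y2 ** Y2 ** Y3 ** Y3)) = trace_word [0,0,1,1,2,2]"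
    by (auto simp: fun_eq_iff trace_word_def triple_nth_def)
  have "hom_invariant 5 (trace_word [0,0,1,1,2] :: 'a triple \<Rightarrow> 'a)"
    "hom_invariant 5 (trace_word [1,1,0,0,2] :: 'a triple \<Rightarrow> 'a)"
    "hom_invariant 6 (trace_word [0,0,1,1,0,2] :: 'a triple \<Rightarrow> 'a)"
    "hom_invariant 6 (trace_word [0,0,1,1,2,2] :: 'a triple \<Rightarrow> 'a)"
    using hom_invariant_trace_word[of "[0,0,1,1,2]"] hom_invariant_trace_word[of "[1,1,0,0,2]"]
      hom_invariant_trace_word[of "[0,0,1,1,0,2]"] hom_invariant_trace_word[of "[0,0,1,1,2,2]"]
    by (simp_all add: numeral_eq_Suc)
  then show ?thesis
    unfolding indecomposable_def words
    using hom_invariant_lincomb not_decomposable_a[OF assms(2)] not_decomposable_b not_decomposable_c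
    by blast
qed

end
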